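(* Each of the following representations $\zeta_i:\mathrm{TVB}_2\to\mathrm{GL}_3(\mathbb{C})$, $1\le i\le 8$ (for every admissible choice of parameters), is unfaithful, i.e. not injective: \begin{itemize} \item[(1)] $\zeta_1(\sigma_1)=\begin{pmatrix} d & b\\ b/x^2 & d\end{pmatrix}\oplus 1$, $\zeta_1(\rho_1)=\begin{pmatrix} 0 & x\\ 1/x & 0\end{pmatrix}\oplus 1$, $\zeta_1(\gamma_1)=\mathrm{diag}(-1,1,1)$, $\zeta_1(\gamma_2)=\mathrm{diag}(1,-1,1)$, where $b,d,x\in\mathbb{C}$, $b^2-d^2x^2\neq 0$, $x\neq 0$. \item[(2)] $\zeta_2(\sigma_1)=\begin{pmatrix} \frac{2bw+dx}{x} & b\\ \frac{b-bw^2}{x^2} & d\end{pmatrix}\oplus 1$, $\zeta_2(\rho_1)=\begin{pmatrix} w & x\\ \frac{1-w^2}{x} & -w\end{pmatrix}\oplus 1$, $\zeta_2(\gamma_1)=\zeta_2(\gamma_2)=I_3$, where $b,d,w,x\in\mathbb{C}$, $x\neq 0$, $dx+bw\neq \pm b$. \item[(3)] $\zeta_3(\sigma_1)=\begin{pmatrix} a & b\\ c & d\end{pmatrix}\oplus 1$, $\zeta_3(\rho_1)=\mathrm{diag}(-1,-1,1)$, $\zeta_3(\gamma_1)=\zeta_3(\gamma_2)=I_3$, $ad-bc\neq 0$. \item[(4)] $\zeta_4(\sigma_1)=\begin{pmatrix} a & b\\ c & d\end{pmatrix}\oplus 1$, $\zeta_4(\rho_1)=\zeta_4(\gamma_1)=\zeta_4(\gamma_2)=I_3$,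 $ad-bc\neq 0$. \item[(5)] $\zeta_5(\sigma_1)=\begin{pmatrix} a & 0\\ c & d\end{pmatrix}\oplus 1$, $\zeta_5(\rho_1)=\begin{pmatrix} -1 & 0\\ \frac{2c}{d-a} & 1\end{pmatrix}\oplus 1$, $\zeta_5(\gamma_1)=\zeta_5(\gamma_2)=I_3$, $ad\neq 0$, $a\neq d$. \item[(6)] $\zeta_6(\sigma_1)=\begin{pmatrix} a & 0\\ c & d\end{pmatrix}\oplus 1$, $\zeta_6(\rho_1)=\begin{pmatrix} 1 & 0\\ \frac{2c}{a-d} & -1\end{pmatrix}\oplus 1$, $\zeta_6(\gamma_1)=\zeta_6(\gamma_2)=I_3$, $ad\neq 0$, $a\neq d$. \item[(7)] $\zeta_7(\sigma_1)=\mathrm{diag}(d,d,1)$, $\zeta_7(\rho_1)=\begin{pmatrix} 1 & 0\\ y & -1\end{pmatrix}\oplus 1$, $\zeta_7(\gamma_1)=\zeta_7(\gamma_2)=I_3$, $d\neq 0$. \item[(8)] $\zeta_8(\sigma_1)=\mathrm{diag}(d,d,1)$, $\zeta_8(\rho_1)=\begin{pmatrix} -1 & 0\\ y & 1\end{pmatrix}\oplus 1$, $\zeta_8(\gamma_1)=\zeta_8(\gamma_2)=I_3$, $d\neq 0$. \end{itemize} (All parameters are complex numbers.)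
   Context: The twisted virtual braid group $\mathrm{TVB}_2$ is the group with generators $\sigma_1,\rho_1,\gamma_1,\gamma_2$ and defining relations $\rho_1^2=1$, $\gamma_1^2=\gamma_2^2=1$, $\gamma_1\gamma_2=\gamma_2\gamma_1$, $\rho_1\gamma_1=\gamma_2\rho_1$, $\rho_1\sigma_1\rho_1=\gamma_2\gamma_1\sigma_1\gamma_1\gamma_2$. For a $2\times 2$ matrix $M$, $M\oplus 1$ denotes the $3\times3$ block-diagonal matrix with blocks $M$ and $1$. A representation is faithful if it is injective. *)

theory Defs
  imports "HOL-Analysis.Analysis"
begin

text \<open>Generators of TVB_2. A letter is a generator with an exponent flag
  (True = the generator, False = its inverse).\<close>
datatype gen = Sig | Rho | Gam1 | Gam2

type_synonym letter = "gen \<times> bool"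
type_synonym word = "letter list"

definition g :: "gen \<Rightarrow> letter" where "g x = (x, True)"
definition gi :: "gen \<Rightarrow> letter" where "gi x = (x, False)"

text \<open>Defining relators (each relation u = v written as u v^{-1}).\<close>
definition tvb2_relators :: "word set" where
  "tvb2_relators =
    { [g Rho, g Rho],
      [g Gam1, g Gam1],
      [g Gam2, g Gam2],
      [g Gam1, g Gam2, gi Gam1, gi Gam2],
      [g Rho, g Gam1, gi Rho, gi Gam2],
      [g Rho, g Sig, g Rho, gi Gam2, gi Gam1, gi Sig, gi Gam1, gi Gam2] }"

inductive tvb2_eq :: "word \<Rightarrow> word \<Rightarrow> bool" where
  refl: "tvb2_eq w w"
| sym: "tvb2_eq u v \<Longrightarrow> tvb2_eq v u"
| trans: "tvb2_eq u v \<Longrightarrow> tvb2_eq v w \<Longrightarrow> tvb2_eq u w"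
| cancel: "tvb2_eq (u @ [(x, s), (x, \<not> s)] @ v) (u @ v)"
| relator: "r \<in> tvb2_relators \<Longrightarrow> tvb2_eq (u @ r @ v) (u @ v)"

type_synonym mat3 = "complex ^ 3 ^ 3"

definition eval_word :: "(gen \<Rightarrow> mat3) \<Rightarrow> word \<Rightarrow> mat3" where
  "eval_word f w = foldr (\<lambda>(x, s) acc. (if s then f x else matrix_inv (f x)) ** acc) w (mat 1)"

definition tvb2_rep :: "(gen \<Rightarrow> mat3) \<Rightarrow> bool" where
  "tvb2_rep f \<longleftrightarrow> (\<forall>x. invertible (f x)) \<and> (\<forall>r \<in> tvb2_relators. eval_word f r = mat 1)"

definition tvb2_faithful :: "(gen \<Rightarrow> mat3) \<Rightarrow> bool" where
  "tvb2_faithful f \<longleftrightarrow> (\<forall>w. eval_word f w = mat 1 \<longrightarrow> tvb2_eq w [])"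

definition blk :: "complex \<Rightarrow> complex \<Rightarrow> complex \<Rightarrow> complex \<Rightarrow> mat3" where
  "blk a b c d = vector [vector [a, b, 0], vector [c, d, 0], vector [0, 0, 1]]"

definition zeta1 :: "complex \<Rightarrow> complex \<Rightarrow> complex \<Rightarrow> gen \<Rightarrow> mat3" where
  "zeta1 b d x = (\<lambda>y. case y of
     Sig \<Rightarrow> blk d b (b / x^2) d
   | Rho \<Rightarrow> blk 0 x (1 / x) 0
   | Gam1 \<Rightarrow> blk (-1) 0 0 1
   | Gam2 \<Rightarrow> blk 1 0 0 (-1))"

definition zeta2 :: "complex \<Rightarrow> complex \<Rightarrow> complex \<Rightarrow> complex \<Rightarrow> gen \<Rightarrow> mat3" where
  "zeta2 b d w x = (\<lambda>y. case y of
     Sig \<Rightarrow> blk ((2*b*w + d*x) / x) b ((b - b*w^2) / x^2) d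
   | Rho \<Rightarrow> blk w x ((1 - w^2) / x) (-w)
   | Gam1 \<Rightarrow> mat 1
   | Gam2 \<Rightarrow> mat 1)"

definition zeta3 :: "complex \<Rightarrow> complex \<Rightarrow> complex \<Rightarrow> complex \<Rightarrow> gen \<Rightarrow> mat3" where
  "zeta3 a b c d = (\<lambda>y. case y of
     Sig \<Rightarrow> blk a b c d
   | Rho \<Rightarrow> blk (-1) 0 0 (-1)
   | Gam1 \<Rightarrow> mat 1
   | Gam2 \<Rightarrow> mat 1)"

definition zeta4 :: "complex \<Rightarrow> complex \<Rightarrow> complex \<Rightarrow> complex \<Rightarrow> gen \<Rightarrow> mat3" where
  "zeta4 a b c d = (\<lambda>y. case y of
     Sig \<Rightarrow> blk a b c d
   | Rho \<Rightarrow> mat 1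
   | Gam1 \<Rightarrow> mat 1
   | Gam2 \<Rightarrow> mat 1)"

definition zeta5 :: "complex \<Rightarrow> complex \<Rightarrow> complex \<Rightarrow> gen \<Rightarrow> mat3" where
  "zeta5 a c d = (\<lambda>y. case y of
     Sig \<Rightarrow> blk a 0 c d
   | Rho \<Rightarrow> blk (-1) 0 (2*c / (d - a)) 1
   | Gam1 \<Rightarrow> mat 1
   | Gam2 \<Rightarrow> mat 1)"

definition zeta6 :: "complex \<Rightarrow> complex \<Rightarrow> complex \<Rightarrow> gen \<Rightarrow> mat3" where
  "zeta6 a c d = (\<lambda>y. case y of
     Sig \<Rightarrow> blk a 0 c d
   | Rho \<Rightarrow> blk 1 0 (2*c / (a - d)) (-1)
   | Gam1 \<Rightarrow> mat 1
   | Gam2 \<Rightarrow> mat 1)"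

definition zeta7 :: "complex \<Rightarrow> complex \<Rightarrow> gen \<Rightarrow> mat3" where
  "zeta7 d y0 = (\<lambda>y. case y of
     Sig \<Rightarrow> blk d 0 0 d
   | Rho \<Rightarrow> blk 1 0 y0 (-1)
   | Gam1 \<Rightarrow> mat 1
   | Gam2 \<Rightarrow> mat 1)"

definition zeta8 :: "complex \<Rightarrow> complex \<Rightarrow> gen \<Rightarrow> mat3" where
  "zeta8 d y0 = (\<lambda>y. case y of
     Sig \<Rightarrow> blk d 0 0 d
   | Rho \<Rightarrow> blk (-1) 0 y0 1
   | Gam1 \<Rightarrow> mat 1
   | Gam2 \<Rightarrow> mat 1)"

end

theory Submission
  imports Defs
begin

text \<open>In each of the eight representations the image of \<open>\<gamma>\<^sub>1\<gamma>\<^sub>2\<close> is \<open>\<plusminus>1\<close> on the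
  \<open>2\<times>2\<close> block and so commutes with the image of \<open>\<sigma>\<^sub>1\<close>; the last defining relation
  \<open>\<rho>\<^sub>1\<sigma>\<^sub>1\<rho>\<^sub>1 = \<gamma>\<^sub>2\<gamma>\<^sub>1\<sigma>\<^sub>1\<gamma>\<^sub>1\<gamma>\<^sub>2\<close> then forces \<open>\<rho>\<^sub>1\<sigma>\<^sub>1\<rho>\<^sub>1\<sigma>\<^sub>1\<inverse>\<close> into the kernel.
  This element is nontrivial in \<open>TVB\<^sub>2\<close>: the permutations \<open>\<gamma>\<^sub>1 \<mapsto> (1 2)\<close>,
  \<open>\<gamma>\<^sub>2 \<mapsto> (3 4)\<close>, \<open>\<rho>\<^sub>1 \<mapsto> (1 3)(2 4)\<close>, \<open>\<sigma>\<^sub>1 \<mapsto> (1 4)\<close> satisfy the defining relations,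
  and under them \<open>\<rho>\<^sub>1\<sigma>\<^sub>1\<rho>\<^sub>1\<sigma>\<^sub>1\<inverse>\<close> sends 1 to 4.\<close>

lemma blk_mult:
  "blk a b c d ** blk a' b' c' d' = blk (a*a' + b*c') (a*b' + b*d') (c*a' + d*c') (c*b' + d*d')"
  unfolding blk_def matrix_matrix_mult_def by (simp add: vec_eq_iff forall_3 sum_3)

lemma mat_1_eq_blk: "(mat 1 :: mat3) = blk 1 0 0 1"
  unfolding blk_def by (simp add: vec_eq_iff forall_3 mat_def)

lemma blk_eq_iff: "blk a b c d = blk a' b' c' d' \<longleftrightarrow> a = a' \<and> b = b' \<and> c = c' \<and> d = d'"
  unfolding blk_def by (simp add: vec_eq_iff forall_3)

lemma invertible_blk:
  assumes "a*d - b*c \<noteq> 0"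
  shows "invertible (blk a b c d)"
proof -
  obtain D where D: "a*d - b*c = D" "D \<noteq> 0" using assms by blast
  then have "blk a b c d ** blk (d/D) (-b/D) (-c/D) (a/D) = mat 1"
            "blk (d/D) (-b/D) (-c/D) (a/D) ** blk a b c d = mat 1"
    by (simp_all add: blk_mult mat_1_eq_blk blk_eq_iff field_simps)
  then show ?thesis unfolding invertible_def by blast
qed

lemma
  fixes A :: "'a::semiring_1 ^ 'n ^ 'm"
  assumes "invertible A"
  shows matrix_inv_right: "A ** matrix_inv A = mat 1"
    and matrix_inv_left: "matrix_inv A ** A = mat 1"
proof -
  have "A ** matrix_inv A = mat 1 \<and> matrix_inv A ** A = mat 1"
    using assms unfolding invertible_def matrix_inv_def by (rule someI_ex)
  then show "A ** matrix_inv A = mat 1" and "matrix_inv A ** A = mat 1"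
    by simp_all
qed

lemma matrix_inv_unique:
  fixes A :: "'a::semiring_1 ^ 'n ^ 'm" and B :: "'a ^ 'm ^ 'n"
  assumes "A ** B = mat 1" and "B ** A = mat 1"
  shows "matrix_inv A = B"
proof -
  have "invertible A" using assms unfolding invertible_def by blast
  then have "matrix_inv A = matrix_inv A ** (A ** B)" by (simp add: assms)
  also have "\<dots> = B" using \<open>invertible A\<close> by (simp add: matrix_mul_assoc matrix_inv_left)
  finally show ?thesis .
qed

lemma matrix_inv_involution: "A ** A = mat 1 \<Longrightarrow> matrix_inv A = A"
  for A :: "'a::semiring_1 ^ 'n ^ 'n"
  by (rule matrix_inv_unique)

lemma invertible_involution: "A ** A = mat 1 \<Longrightarrow> invertible A"
  for A :: "'a::semiring_1 ^ 'n ^ 'n"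
  unfolding invertible_def by blast

lemma eval_word_Nil [simp]: "eval_word f [] = mat 1"
  and eval_word_Cons [simp]:
    "eval_word f ((x, s) # w) = (if s then f x else matrix_inv (f x)) ** eval_word f w"
  by (simp_all add: eval_word_def)

lemma tvb2_rep_intro:
  fixes f :: "gen \<Rightarrow> mat3"
  assumes inv_Sig: "invertible (f Sig)"
    and Rho_sq: "f Rho ** f Rho = mat 1"
    and Gam1_sq: "f Gam1 ** f Gam1 = mat 1" and Gam2_sq: "f Gam2 ** f Gam2 = mat 1"
    and Gam_comm: "f Gam1 ** f Gam2 = f Gam2 ** f Gam1"
    and Rho_Gam: "f Rho ** f Gam1 = f Gam2 ** f Rho"
    and Rho_Sig: "f Rho ** f Sig ** f Rho = f Gam2 ** f Gam1 ** f Sig ** f Gam1 ** f Gam2"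
  shows "tvb2_rep f"
proof -
  have inv: "invertible (f x)" for x
    using assms by (cases x) (auto intro: invertible_involution)
  note assoc = matrix_mul_assoc
  have "f Gam1 ** f Gam2 ** f Gam1 ** f Gam2 = mat 1"
    by (metis assoc Gam_comm Gam1_sq Gam2_sq matrix_mul_lid)
  moreover have "f Rho ** f Gam1 ** f Rho ** f Gam2 = mat 1"
    by (metis assoc Rho_Gam Rho_sq Gam2_sq matrix_mul_lid)
  moreover have
    "f Rho ** f Sig ** f Rho ** f Gam2 ** f Gam1 ** matrix_inv (f Sig) ** f Gam1 ** f Gam2 = mat 1"
  proof -
    have "f Rho ** f Sig ** f Rho ** f Gam2 ** f Gam1 ** matrix_inv (f Sig) ** f Gam1 ** f Gam2
        = f Gam2 ** f Gam1 ** f Sig ** (f Gam1 ** (f Gam2 ** f Gam2) ** f Gam1)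
          ** matrix_inv (f Sig) ** f Gam1 ** f Gam2"
      by (simp add: Rho_Sig assoc)
    also have "\<dots> = f Gam2 ** (f Gam1 ** (f Sig ** matrix_inv (f Sig)) ** f Gam1) ** f Gam2"
      by (simp add: Gam1_sq Gam2_sq assoc)
    also have "\<dots> = mat 1"
      by (simp add: matrix_inv_right[OF inv_Sig] Gam1_sq Gam2_sq assoc)
    finally show ?thesis .
  qed
  ultimately show ?thesis
    using inv Rho_sq Gam1_sq Gam2_sq
    by (simp add: tvb2_rep_def tvb2_relators_def g_def gi_def matrix_inv_involution assoc)
qed

text \<open>The exponent flag of a letter is ignored, so \<open>word_perm p\<close> respects \<open>tvb2_eq\<close> only when
  every \<open>p x\<close> is an involution.\<close>
definition word_perm :: "(gen \<Rightarrow> 'a \<Rightarrow> 'a) \<Rightarrow> word \<Rightarrow> 'a \<Rightarrow> 'a" where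
  "word_perm p w = foldr (\<lambda>(x, _) acc. p x \<circ> acc) w id"

lemma word_perm_Nil [simp]: "word_perm p [] = id"
  and word_perm_Cons [simp]: "word_perm p ((x, s) # w) = p x \<circ> word_perm p w"
  by (simp_all add: word_perm_def)

lemma word_perm_append: "word_perm p (u @ v) = word_perm p u \<circ> word_perm p v"
  by (induction u) auto

lemma word_perm_tvb2_eq:
  assumes "tvb2_eq u v"
    and invol: "\<And>x. p x \<circ> p x = id"
    and relators: "\<And>r. r \<in> tvb2_relators \<Longrightarrow> word_perm p r = id"
  shows "word_perm p u = word_perm p v"
  using \<open>tvb2_eq u v\<close>
proof (induction rule: tvb2_eq.induct)
  case (cancel u x s v)
  have "p x (p x a) = a" for a
    using invol by (metis comp_apply id_apply)
  then show ?case by (simp add: word_perm_append fun_eq_iff)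
next
  case (relator r u v)
  then show ?case by (simp add: word_perm_append relators)
qed auto

definition tvb2_perm :: "gen \<Rightarrow> nat \<Rightarrow> nat" where
  "tvb2_perm x = (case x of
     Sig \<Rightarrow> Transposition.transpose 1 4
   | Rho \<Rightarrow> Transposition.transpose 1 3 \<circ> Transposition.transpose 2 4
   | Gam1 \<Rightarrow> Transposition.transpose 1 2
   | Gam2 \<Rightarrow> Transposition.transpose 3 4)"

lemma tvb2_perm_involution: "tvb2_perm x \<circ> tvb2_perm x = id"
  by (cases x) (simp_all add: tvb2_perm_def fun_eq_iff Transposition.transpose_def)

lemma word_perm_tvb2_perm_fixes: "a \<notin> {1, 2, 3, 4} \<Longrightarrow> word_perm tvb2_perm w a = a"
proof (induction w)
  case (Cons l w)
  then show ?case by (cases l; cases "fst l") (auto simp: tvb2_perm_def)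
qed simp

lemma tvb2_perm_relator: "r \<in> tvb2_relators \<Longrightarrow> word_perm tvb2_perm r = id"
proof (rule ext)
  fix a
  assume "r \<in> tvb2_relators"
  then show "word_perm tvb2_perm r a = id a"
    using word_perm_tvb2_perm_fixes[of a r]
    by (cases "a \<in> {1, 2, 3, 4}") (auto simp: tvb2_relators_def tvb2_perm_def g_def gi_def)
qed

lemma Rho_Sig_Rho_Sig_inv_nontrivial: "\<not> tvb2_eq [g Rho, g Sig, g Rho, gi Sig] []"
proof
  assume "tvb2_eq [g Rho, g Sig, g Rho, gi Sig] []"
  then have "word_perm tvb2_perm [g Rho, g Sig, g Rho, gi Sig] = word_perm tvb2_perm []"
    by (rule word_perm_tvb2_eq) (simp_all add: tvb2_perm_involution tvb2_perm_relator)
  then have "word_perm tvb2_perm [g Rho, g Sig, g Rho, gi Sig] 1 = 1"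
    by simp
  then show False
    by (simp add: tvb2_perm_def g_def gi_def)
qed

lemma eval_Rho_Sig_Rho_Sig_inv:
  assumes rep: "tvb2_rep f"
    and comm: "f Gam1 ** f Gam2 ** f Sig = f Sig ** (f Gam1 ** f Gam2)"
  shows "eval_word f [g Rho, g Sig, g Rho, gi Sig] = mat 1"
proof -
  note assoc = matrix_mul_assoc
  have rel: "eval_word f r = mat 1" if "r \<in> tvb2_relators" for r
    using rep that unfolding tvb2_rep_def by blast
  have inv_Sig: "invertible (f Sig)"
    using rep unfolding tvb2_rep_def by blast
  define C where "C = f Gam1 ** f Gam2"
  define S' where "S' = matrix_inv (f Sig)"
  have Gam1_sq: "f Gam1 ** f Gam1 = mat 1" and Gam2_sq: "f Gam2 ** f Gam2 = mat 1"
    using rel[of "[g Gam1, g Gam1]"] rel[of "[g Gam2, g Gam2]"]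
    by (simp_all add: tvb2_relators_def g_def)
  then have C_sq: "C ** C = mat 1"
    using rel[of "[g Gam1, g Gam2, gi Gam1, gi Gam2]"]
    by (simp add: tvb2_relators_def g_def gi_def matrix_inv_involution C_def assoc)
  have Gam21: "f Gam2 ** f Gam1 = C"
  proof -
    have "f Gam2 ** f Gam1 = (f Gam1 ** f Gam1) ** (f Gam2 ** f Gam1) ** (f Gam2 ** f Gam2)"
      by (simp add: Gam1_sq Gam2_sq)
    also have "\<dots> = f Gam1 ** (C ** C) ** f Gam2"
      by (simp add: C_def assoc)
    also have "\<dots> = C"
      by (simp add: C_sq, simp add: C_def)
    finally show ?thesis .
  qed
  have S'_C: "S' ** C = C ** S'"
  proof -
    have "S' ** C = S' ** (C ** f Sig) ** S'"
      using inv_Sig by (simp add: S'_def matrix_inv_right flip: assoc)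
    also have "\<dots> = C ** S'"
      using comm inv_Sig by (simp add: S'_def C_def matrix_inv_left assoc)
    finally show ?thesis .
  qed
  have "eval_word f [g Rho, g Sig, g Rho, gi Sig] = f Rho ** f Sig ** f Rho ** S' ** (C ** C)"
    by (simp add: g_def gi_def S'_def C_sq assoc)
  also have "\<dots> = f Rho ** f Sig ** f Rho ** (S' ** C) ** C"
    by (simp only: assoc)
  also have "\<dots> = f Rho ** f Sig ** f Rho ** (C ** S') ** C"
    by (simp only: S'_C)
  also have "\<dots> = f Rho ** f Sig ** f Rho ** (f Gam2 ** f Gam1) ** S' ** (f Gam1 ** f Gam2)"
    by (simp add: Gam21 C_def assoc)
  also have "\<dots> = mat 1"
    using rel[of "[g Rho, g Sig, g Rho, gi Gam2, gi Gam1, gi Sig, gi Gam1, gi Gam2]"]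
    by (simp add: tvb2_relators_def g_def gi_def S'_def Gam1_sq Gam2_sq matrix_inv_involution assoc)
  finally show ?thesis .
qed

lemma not_tvb2_faithful_if_Gam_prod_commutes_Sig:
  assumes "tvb2_rep f" and "f Gam1 ** f Gam2 ** f Sig = f Sig ** (f Gam1 ** f Gam2)"
  shows "\<not> tvb2_faithful f"
  using eval_Rho_Sig_Rho_Sig_inv[OF assms] Rho_Sig_Rho_Sig_inv_nontrivial
  unfolding tvb2_faithful_def by blast

lemma tvb2_rep_not_faithful_if_trivial_Gam:
  assumes "f Gam1 = mat 1" and "f Gam2 = mat 1"
    and "invertible (f Sig)" and "f Rho ** f Rho = mat 1" and "f Rho ** f Sig ** f Rho = f Sig"
  shows "tvb2_rep f \<and> \<not> tvb2_faithful f"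
proof -
  have "tvb2_rep f"
    by (rule tvb2_rep_intro) (simp_all add: assms)
  then show ?thesis
    using not_tvb2_faithful_if_Gam_prod_commutes_Sig[of f] by (simp add: assms)
qed

lemma zeta1_rep_not_faithful:
  assumes "x \<noteq> 0" and "b^2 - d^2 * x^2 \<noteq> 0"
  shows "tvb2_rep (zeta1 b d x) \<and> \<not> tvb2_faithful (zeta1 b d x)"
proof -
  have "tvb2_rep (zeta1 b d x)"
  proof (rule tvb2_rep_intro)
    have "d * d - b * (b / x^2) \<noteq> 0"
      using assms by (auto simp: field_simps power2_eq_square)
    then show "invertible (zeta1 b d x Sig)"
      by (simp add: zeta1_def invertible_blk)
  qed (use assms in \<open>simp_all add: zeta1_def blk_mult blk_eq_iff mat_1_eq_blk field_simps power2_eq_square\<close>)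
  moreover have "zeta1 b d x Gam1 ** zeta1 b d x Gam2 ** zeta1 b d x Sig
      = zeta1 b d x Sig ** (zeta1 b d x Gam1 ** zeta1 b d x Gam2)"
    by (simp add: zeta1_def blk_mult)
  ultimately show ?thesis
    using not_tvb2_faithful_if_Gam_prod_commutes_Sig by blast
qed

lemma zeta2_rep_not_faithful:
  assumes "x \<noteq> 0" and "d*x + b*w \<noteq> b" and "d*x + b*w \<noteq> - b"
  shows "tvb2_rep (zeta2 b d w x) \<and> \<not> tvb2_faithful (zeta2 b d w x)"
proof (rule tvb2_rep_not_faithful_if_trivial_Gam)
  have "(2*b*w + d*x) / x * d - b * ((b - b*w^2) / x^2) = (d*x + b*w - b) * (d*x + b*w + b) / x^2"
    using assms(1) by (simp add: field_simps power2_eq_square)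
  moreover have "d*x + b*w - b \<noteq> 0" and "d*x + b*w + b \<noteq> 0"
    using assms(2,3) by (auto simp: eq_neg_iff_add_eq_0)
  ultimately show "invertible (zeta2 b d w x Sig)"
    using assms(1) by (simp add: zeta2_def invertible_blk)
qed (use assms in \<open>simp_all add: zeta2_def blk_mult blk_eq_iff mat_1_eq_blk field_simps power2_eq_square\<close>)

lemma zeta3_rep_not_faithful:
  assumes "a*d - b*c \<noteq> 0"
  shows "tvb2_rep (zeta3 a b c d) \<and> \<not> tvb2_faithful (zeta3 a b c d)"
  by (rule tvb2_rep_not_faithful_if_trivial_Gam)
    (simp_all add: zeta3_def invertible_blk[OF assms] blk_mult blk_eq_iff mat_1_eq_blk)

lemma zeta4_rep_not_faithful:
  assumes "a*d - b*c \<noteq> 0"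
  shows "tvb2_rep (zeta4 a b c d) \<and> \<not> tvb2_faithful (zeta4 a b c d)"
  by (rule tvb2_rep_not_faithful_if_trivial_Gam) (simp_all add: zeta4_def invertible_blk[OF assms])

lemma zeta5_rep_not_faithful:
  assumes "a*d \<noteq> 0" and "a \<noteq> d"
  shows "tvb2_rep (zeta5 a c d) \<and> \<not> tvb2_faithful (zeta5 a c d)"
proof (rule tvb2_rep_not_faithful_if_trivial_Gam)
  have "d - a \<noteq> 0"
    using assms(2) by simp
  then show "zeta5 a c d Rho ** zeta5 a c d Sig ** zeta5 a c d Rho = zeta5 a c d Sig"
    by (simp add: zeta5_def blk_mult blk_eq_iff flip: diff_divide_distrib)
      (simp add: divide_eq_eq algebra_simps)
qed (use assms in \<open>simp_all add: zeta5_def invertible_blk blk_mult blk_eq_iff mat_1_eq_blk\<close>)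

lemma zeta6_rep_not_faithful:
  assumes "a*d \<noteq> 0" and "a \<noteq> d"
  shows "tvb2_rep (zeta6 a c d) \<and> \<not> tvb2_faithful (zeta6 a c d)"
proof (rule tvb2_rep_not_faithful_if_trivial_Gam)
  have "a - d \<noteq> 0"
    using assms(2) by simp
  then show "zeta6 a c d Rho ** zeta6 a c d Sig ** zeta6 a c d Rho = zeta6 a c d Sig"
    by (simp add: zeta6_def blk_mult blk_eq_iff flip: diff_divide_distrib)
      (simp add: divide_eq_eq algebra_simps)
qed (use assms in \<open>simp_all add: zeta6_def invertible_blk blk_mult blk_eq_iff mat_1_eq_blk\<close>)

lemma zeta7_rep_not_faithful:
  assumes "d \<noteq> 0"
  shows "tvb2_rep (zeta7 d y) \<and> \<not> tvb2_faithful (zeta7 d y)"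
  by (rule tvb2_rep_not_faithful_if_trivial_Gam)
    (simp_all add: zeta7_def assms invertible_blk blk_mult blk_eq_iff mat_1_eq_blk)

lemma zeta8_rep_not_faithful:
  assumes "d \<noteq> 0"
  shows "tvb2_rep (zeta8 d y) \<and> \<not> tvb2_faithful (zeta8 d y)"
  by (rule tvb2_rep_not_faithful_if_trivial_Gam)
    (simp_all add: zeta8_def assms invertible_blk blk_mult blk_eq_iff mat_1_eq_blk)

theorem theorem3p2:
  shows
  "(\<forall>b d x. x \<noteq> 0 \<and> b^2 - d^2 * x^2 \<noteq> 0 \<longrightarrow>
       tvb2_rep (zeta1 b d x) \<and> \<not> tvb2_faithful (zeta1 b d x))
 \<and> (\<forall>b d w x. x \<noteq> 0 \<and> d*x + b*w \<noteq> b \<and> d*x + b*w \<noteq> - b \<longrightarrow>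
       tvb2_rep (zeta2 b d w x) \<and> \<not> tvb2_faithful (zeta2 b d w x))
 \<and> (\<forall>a b c d. a*d - b*c \<noteq> 0 \<longrightarrow>
       tvb2_rep (zeta3 a b c d) \<and> \<not> tvb2_faithful (zeta3 a b c d))
 \<and> (\<forall>a b c d. a*d - b*c \<noteq> 0 \<longrightarrow>
       tvb2_rep (zeta4 a b c d) \<and> \<not> tvb2_faithful (zeta4 a b c d))
 \<and> (\<forall>a c d. a*d \<noteq> 0 \<and> a \<noteq> d \<longrightarrow>
       tvb2_rep (zeta5 a c d) \<and> \<not> tvb2_faithful (zeta5 a c d))
 \<and> (\<forall>a c d. a*d \<noteq> 0 \<and> a \<noteq> d \<longrightarrow>
       tvb2_rep (zeta6 a c d) \<and> \<not> tvb2_faithful (zeta6 a c d))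
 \<and> (\<forall>d y. d \<noteq> 0 \<longrightarrow>
       tvb2_rep (zeta7 d y) \<and> \<not> tvb2_faithful (zeta7 d y))
 \<and> (\<forall>d y. d \<noteq> 0 \<longrightarrow>
       tvb2_rep (zeta8 d y) \<and> \<not> tvb2_faithful (zeta8 d y))"
  by (intro conjI allI impI)
    (simp_all add: zeta1_rep_not_faithful zeta2_rep_not_faithful zeta3_rep_not_faithful
      zeta4_rep_not_faithful zeta5_rep_not_faithful zeta6_rep_not_faithful
      zeta7_rep_not_faithful zeta8_rep_not_faithful)

end
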